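(* For every integer $\nu\ge0$, $$\operatorname{sech}^5(D/2)\,0^{[2\nu]}=\tfrac43\sinh(D)\,0^{[2\nu+3]},$$ and consequently $$\frac43\sum_{k=0}^{\nu+1}t(2\nu+3,2k+1)=\frac{(2\nu)!}{2^{2\nu}}\binom{-5/2}{\nu}.$$
   Context: Central factorials: $x^{[0]}=1$, $x^{[n]}=x\prod_{j=1}^{n-1}(x+\tfrac n2-j)$ for $n\ge1$; $t(n,k)$ is defined by $x^{[n]}=\sum_k t(n,k)x^k$. For a power series $h(D)=\sum_k h_kD^k$ (the Taylor series at $0$ of the indicated function of $D$), $h(D)\,0^{[n]}:=\sum_k h_k\,k!\,t(n,k)$. *)

theory Defs
  imports "HOL-Analysis.Analysis" "HOL-Computational_Algebra.Polynomial"
begin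

definition central_fact :: "nat \<Rightarrow> real poly" where
  "central_fact n = (if n = 0 then 1
     else [:0, 1:] * (\<Prod>j\<in>{1..<n}. [: real n / 2 - real j, 1 :]))"

definition cfn :: "nat \<Rightarrow> nat \<Rightarrow> real" where
  "cfn n k = coeff (central_fact n) k"

text \<open>h(D) 0^[n] = sum_k h_k k! t(n,k), where h_k k! is the k-th derivative of h at 0
  (h_k the Taylor coefficients at 0). Since t(n,k) = 0 for k > n the sum is over k \<le> n.\<close>
definition op_zero :: "(real \<Rightarrow> real) \<Rightarrow> nat \<Rightarrow> real" where
  "op_zero h n = (\<Sum>k\<le>n. (deriv ^^ k) h 0 * cfn n k)"

end

theory Submission
  imports Defs
begin

(* The operator  h(D) 0^[n] = \<Sum>k h^(k)(0) t(n,k)  is evaluated by a two-step recursion in n.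
   Since x^[n+2] = (x^2 - n^2/4) x^[n], one gets for every h
       h(D) 0^[n+2] = h''(D) 0^[n] - n^2/4 h(D) 0^[n].
   Writing sech_b(x) = 1/cosh(x/2)^b, a direct computation gives
       sech_b'' = b^2/4 sech_b - b(b+1)/4 sech_(b+2),
   and since h \<mapsto> h(D) 0^[n] is linear on infinitely differentiable functions the
   recursion closes up on the family sech_b; an induction over n with an identity for
   generalized binomial coefficients yields
       sech_b(D) 0^[2n] = (2n)!/2^(2n) * binom(-b/2, n).
   For sinh one has sinh'' = sinh, so sinh(D) 0^[n+2] = (1 - n^2/4) sinh(D) 0^[n], which
   gives  4/3 sinh(D) 0^[2n+3] = (2n)!/2^(2n) * binom(-5/2, n).  Comparing both closed forms
   for b = 5 proves the first claim; the second one follows because sinh^(k)(0) is 1 for odd k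
   and 0 for even k, so sinh(D) 0^[2m+1] is the sum of the odd-index central factorial numbers.
   Linearity of the higher derivatives is justified through the span of the functions
   sinh(x/2)^e / cosh(x/2)^b, which is closed under differentiation. *)


lemma central_fact_Suc_Suc:
  "central_fact (Suc (Suc n)) = [: - (real n)\<^sup>2 / 4, 0, 1 :] * central_fact n"
proof (cases n)
  case 0
  then show ?thesis by (simp add: central_fact_def)
next
  case (Suc m)
  let ?f = "\<lambda>N j. [: real N / 2 - real j, 1 :]"
  have "(\<Prod>j\<in>{1..<Suc (Suc n)}. ?f (Suc (Suc n)) j)
      = (\<Prod>j\<in>{1..<Suc n}. ?f (Suc (Suc n)) j) * [: - real n / 2, 1 :]"
  proof -
    have "real (Suc (Suc n)) / 2 - real (Suc n) = - real n / 2" by (simp add: field_simps)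
    then show ?thesis by (subst prod.atLeastLessThan_Suc) simp_all
  qed
  also have "(\<Prod>j\<in>{1..<Suc n}. ?f (Suc (Suc n)) j)
      = [: real n / 2, 1 :] * (\<Prod>j\<in>{Suc 1..<Suc n}. ?f (Suc (Suc n)) j)"
    using Suc by (subst prod.atLeast_Suc_lessThan) (auto simp: field_simps)
  also have "(\<Prod>j\<in>{Suc 1..<Suc n}. ?f (Suc (Suc n)) j) = (\<Prod>j\<in>{1..<n}. ?f n j)"
    by (subst prod.shift_bounds_Suc_ivl) (simp add: field_simps)
  finally have prod: "(\<Prod>j\<in>{1..<Suc (Suc n)}. ?f (Suc (Suc n)) j)
      = ([: real n / 2, 1 :] * [: - real n / 2, 1 :]) * (\<Prod>j\<in>{1..<n}. ?f n j)"
    by (simp only: ac_simps)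
  have square: "[: real n / 2, 1 :] * [: - real n / 2, 1 :] = [: - (real n)\<^sup>2 / 4, 0, 1 :]"
    by (simp add: power2_eq_square)
  have "central_fact (Suc (Suc n)) = [:0, 1:] * (\<Prod>j\<in>{1..<Suc (Suc n)}. ?f (Suc (Suc n)) j)"
    unfolding central_fact_def by (rule if_not_P) simp
  moreover have "central_fact n = [:0, 1:] * (\<Prod>j\<in>{1..<n}. ?f n j)"
    unfolding central_fact_def using Suc by (intro if_not_P) simp
  ultimately show ?thesis unfolding prod square by (simp only: ac_simps)
qed

lemma degree_central_fact: "degree (central_fact n) \<le> n"
proof (cases "n = 0")
  case False
  have "degree (\<Prod>j\<in>{1..<n}. [: real n / 2 - real j, 1 :])
      \<le> (\<Sum>j\<in>{1..<n}. degree [: real n / 2 - real j, 1 :])"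
    using degree_prod_sum_le[of "{1..<n}" "\<lambda>j. [: real n / 2 - real j, 1 :]"] by (simp add: o_def)
  also have "\<dots> = n - 1" by simp
  finally show ?thesis
    using False degree_mult_le[of "[:0, 1 :: real:]" "\<Prod>j\<in>{1..<n}. [: real n / 2 - real j, 1 :]"]
    unfolding central_fact_def by simp
qed (simp add: central_fact_def)

lemma op_zero_Suc_Suc:
  "op_zero h (Suc (Suc n)) = op_zero ((deriv ^^ 2) h) n - (real n)\<^sup>2 / 4 * op_zero h n"
proof -
  let ?p = "central_fact n" and ?c = "(real n)\<^sup>2 / 4"
  have rec: "central_fact (Suc (Suc n)) = smult (- ?c) ?p + pCons 0 (pCons 0 ?p)"
    by (simp add: central_fact_Suc_Suc mult_pCons_left)
  have high: "coeff ?p (Suc n) = 0" "coeff ?p (Suc (Suc n)) = 0"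
    using degree_central_fact[of n] by (auto intro: coeff_eq_0)
  have shift: "(deriv ^^ Suc (Suc k)) h = (deriv ^^ k) ((deriv ^^ 2) h)" for k
    by (metis add_2_eq_Suc' funpow_add o_apply)
  have "op_zero h (Suc (Suc n))
      = (\<Sum>k\<le>Suc (Suc n). (deriv ^^ k) h 0 * coeff (pCons 0 (pCons 0 ?p)) k)
        - ?c * (\<Sum>k\<le>Suc (Suc n). (deriv ^^ k) h 0 * coeff ?p k)"
    unfolding op_zero_def cfn_def rec
    by (simp add: algebra_simps sum.distrib sum_distrib_left sum_subtractf)
  also have "(\<Sum>k\<le>Suc (Suc n). (deriv ^^ k) h 0 * coeff (pCons 0 (pCons 0 ?p)) k)
      = (\<Sum>k\<le>n. (deriv ^^ Suc (Suc k)) h 0 * coeff ?p k)"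
    by (simp add: sum.atMost_Suc_shift del: sum.atMost_Suc funpow.simps)
  also have "(\<Sum>k\<le>Suc (Suc n). (deriv ^^ k) h 0 * coeff ?p k) = (\<Sum>k\<le>n. (deriv ^^ k) h 0 * coeff ?p k)"
    using high by simp
  finally show ?thesis unfolding op_zero_def cfn_def shift by simp
qed


definition infinitely_differentiable :: "(real \<Rightarrow> real) \<Rightarrow> bool" where
  "infinitely_differentiable f \<longleftrightarrow> (\<forall>k x. (deriv ^^ k) f differentiable (at x))"

lemma higher_deriv_lincomb:
  assumes f: "infinitely_differentiable f" and g: "infinitely_differentiable g"
  shows "(deriv ^^ k) (\<lambda>x. c * f x + d * g x) = (\<lambda>x. c * (deriv ^^ k) f x + d * (deriv ^^ k) g x)"
proof (induction k)
  case (Suc k)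
  have "((\<lambda>x. c * (deriv ^^ k) f x + d * (deriv ^^ k) g x) has_real_derivative
      c * deriv ((deriv ^^ k) f) x + d * deriv ((deriv ^^ k) g) x) (at x)" for x
    using f g unfolding infinitely_differentiable_def DERIV_deriv_iff_real_differentiable [symmetric]
    by (auto intro!: derivative_eq_intros)
  then have "deriv (\<lambda>x. c * (deriv ^^ k) f x + d * (deriv ^^ k) g x)
      = (\<lambda>x. c * deriv ((deriv ^^ k) f) x + d * deriv ((deriv ^^ k) g) x)"
    by (intro ext DERIV_imp_deriv)
  then show ?case using Suc by simp
qed simp

lemma op_zero_lincomb:
  assumes "infinitely_differentiable f" "infinitely_differentiable g"
  shows "op_zero (\<lambda>x. c * f x + d * g x) n = c * op_zero f n + d * op_zero g n"
  unfolding op_zero_def higher_deriv_lincomb[OF assms]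
  by (simp add: algebra_simps sum.distrib sum_distrib_left)


(* Derivative of the hyperbolic monomial sinh(x/2)^e / cosh(x/2)^b, rewritten with
   cosh^2 = 1 + sinh^2 as a combination of two monomials with denominator cosh(x/2)^(b+1). *)
lemma sech_monomial_deriv:
  "((\<lambda>x. sinh (x/2) ^ e / cosh (x/2) ^ b) has_real_derivative
      real e / 2 * (sinh (x/2) ^ (e - 1) / cosh (x/2) ^ (b + 1))
    + (real e - real b) / 2 * (sinh (x/2) ^ (e + 1) / cosh (x/2) ^ (b + 1))) (at x)"
proof -
  define s c where "s = sinh (x/2)" and "c = cosh (x/2)"
  have c: "c > 0" and cs: "c\<^sup>2 = 1 + s\<^sup>2"
    unfolding s_def c_def using cosh_square_eq[of "x/2"] by auto
  have "((\<lambda>x. sinh (x/2) ^ e / cosh (x/2) ^ b) has_real_derivative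
      real e / 2 * s ^ (e - 1) * c * c ^ b / (c ^ b)\<^sup>2
      - real b / 2 * s ^ (e + 1) * c ^ (b - 1) / (c ^ b)\<^sup>2) (at x)"
    unfolding s_def c_def
    by (rule derivative_eq_intros refl | simp)+ (simp add: power2_eq_square field_simps)
  moreover have "real e / 2 * s ^ (e - 1) * c * c ^ b / (c ^ b)\<^sup>2
      = real e / 2 * (s ^ (e - 1) / c ^ (b + 1)) + real e / 2 * (s ^ (e + 1) / c ^ (b + 1))"
  proof -
    have "real e * s ^ (e - 1) * c\<^sup>2 = real e * s ^ (e - 1) + real e * s ^ (e + 1)"
      unfolding cs by (cases e) (simp_all add: algebra_simps power2_eq_square)
    then show ?thesis using c by (simp add: field_simps power2_eq_square)
  qed
  moreover have "real b / 2 * s ^ (e + 1) * c ^ (b - 1) / (c ^ b)\<^sup>2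
      = real b / 2 * (s ^ (e + 1) / c ^ (b + 1))"
    using c by (cases b) (simp_all add: field_simps power2_eq_square)
  ultimately show ?thesis unfolding s_def c_def by (simp add: algebra_simps diff_divide_distrib)
qed

inductive hyperbolic_span :: "(real \<Rightarrow> real) \<Rightarrow> bool" where
  monomial: "hyperbolic_span (\<lambda>x. sinh (x/2) ^ e / cosh (x/2) ^ b)"
| add: "hyperbolic_span f \<Longrightarrow> hyperbolic_span g \<Longrightarrow> hyperbolic_span (\<lambda>x. f x + g x)"
| scale: "hyperbolic_span f \<Longrightarrow> hyperbolic_span (\<lambda>x. c * f x)"

lemma hyperbolic_span_deriv:
  "hyperbolic_span f \<Longrightarrow> (\<forall>x. (f has_real_derivative deriv f x) (at x)) \<and> hyperbolic_span (deriv f)"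
proof (induction rule: hyperbolic_span.induct)
  case (monomial e b)
  let ?D = "\<lambda>x. real e / 2 * (sinh (x/2) ^ (e - 1) / cosh (x/2) ^ (b + 1))
    + (real e - real b) / 2 * (sinh (x/2) ^ (e + 1) / cosh (x/2) ^ (b + 1))"
  have "deriv (\<lambda>x. sinh (x/2) ^ e / cosh (x/2) ^ b) = ?D"
    using sech_monomial_deriv by (intro ext DERIV_imp_deriv)
  moreover have "hyperbolic_span ?D" by (intro hyperbolic_span.intros)
  ultimately show ?case using sech_monomial_deriv by simp
next
  case (add f g)
  have "((\<lambda>x. f x + g x) has_real_derivative (deriv f x + deriv g x)) (at x)" for x
    using add by (auto intro!: derivative_eq_intros)
  moreover from this have "deriv (\<lambda>x. f x + g x) = (\<lambda>x. deriv f x + deriv g x)"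
    by (intro ext DERIV_imp_deriv)
  ultimately show ?case using add by (simp add: hyperbolic_span.add)
next
  case (scale f c)
  have "((\<lambda>x. c * f x) has_real_derivative (c * deriv f x)) (at x)" for x
    using scale by (auto intro!: derivative_eq_intros)
  moreover from this have "deriv (\<lambda>x. c * f x) = (\<lambda>x. c * deriv f x)"
    by (intro ext DERIV_imp_deriv)
  ultimately show ?case using scale by (simp add: hyperbolic_span.scale)
qed

lemma hyperbolic_span_infinitely_differentiable:
  assumes "hyperbolic_span f"
  shows "infinitely_differentiable f"
proof -
  have "hyperbolic_span ((deriv ^^ k) f)" for k
    by (induction k) (use assms hyperbolic_span_deriv in auto)
  then show ?thesis
    unfolding infinitely_differentiable_def
    using hyperbolic_span_deriv real_differentiable_def by blast
qed


definition sech_pow :: "nat \<Rightarrow> real \<Rightarrow> real" where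
  "sech_pow b = (\<lambda>x. 1 / cosh (x/2) ^ b)"

lemma sech_pow_infinitely_differentiable: "infinitely_differentiable (sech_pow b)"
  using hyperbolic_span.monomial[of 0 b]
  by (simp add: sech_pow_def hyperbolic_span_infinitely_differentiable)

lemma sech_pow_deriv2:
  "(deriv ^^ 2) (sech_pow b)
    = (\<lambda>x. (real b)\<^sup>2 / 4 * sech_pow b x + (- (real b * (real b + 1) / 4)) * sech_pow (b + 2) x)"
proof (rule ext)
  fix x :: real
  define s c where "s = sinh (x/2)" and "c = cosh (x/2)"
  have c: "c > 0" and s2: "s\<^sup>2 = c\<^sup>2 - 1"
    unfolding s_def c_def using cosh_square_eq[of "x/2"] by auto
  have d1: "deriv (sech_pow b) = (\<lambda>x. - real b / 2 * (sinh (x/2) / cosh (x/2) ^ (b + 1)))"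
    using sech_monomial_deriv[of 0 b] by (intro ext DERIV_imp_deriv) (simp add: sech_pow_def)
  have "((\<lambda>x. - real b / 2 * (sinh (x/2) ^ 1 / cosh (x/2) ^ (b + 1))) has_real_derivative
      - real b / 2 * (1 / 2 * (1 / c ^ (b + 2)) + - real b / 2 * (s\<^sup>2 / c ^ (b + 2)))) (at x)"
    using DERIV_cmult[OF sech_monomial_deriv[of 1 "b + 1" x], of "- real b / 2"]
    by (simp add: s_def c_def numeral_2_eq_2)
  then have "deriv (deriv (sech_pow b)) x
      = - real b / 2 * (1 / 2 * (1 / c ^ (b + 2)) + - real b / 2 * (s\<^sup>2 / c ^ (b + 2)))"
    unfolding d1 by (intro DERIV_imp_deriv) simp
  also have "\<dots> = (real b)\<^sup>2 / 4 * (1 / c ^ b) + (- (real b * (real b + 1) / 4)) * (1 / c ^ (b + 2))"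
    using c unfolding s2 by (simp add: field_simps power2_eq_square)
  finally show "(deriv ^^ 2) (sech_pow b) x
      = (real b)\<^sup>2 / 4 * sech_pow b x + (- (real b * (real b + 1) / 4)) * sech_pow (b + 2) x"
    by (simp add: numeral_2_eq_2 sech_pow_def c_def)
qed


lemma fact_even_over_power_Suc:
  "fact (2 * Suc n) / 2 ^ (2 * Suc n)
    = fact (2 * n) / 2 ^ (2 * n) * ((real n + 1) * (2 * real n + 1) / 2 :: real)"
  by (simp add: fact_Suc power_add field_simps)

lemma gbinomial_Suc_ratio:
  fixes a :: real
  shows "(real n + 1) * (a gchoose Suc n) = (a - real n) * (a gchoose n)"
  using gbinomial_mult_1[of a n] by (simp add: algebra_simps)

(* The contiguity relation of binom(a, n) that matches the recursion of sech_b(D) 0^[2n]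
   (with a = -b/2, so that b(b+1)/4 = a(2a-1)/2 and -(b+2)/2 = a - 1). *)
lemma gbinomial_sech_step:
  fixes a :: real
  shows "(a\<^sup>2 - (real n)\<^sup>2) * (a gchoose n) - a * (2 * a - 1) / 2 * ((a - 1) gchoose n)
    = (real n + 1) * (2 * real n + 1) / 2 * (a gchoose Suc n)"
proof -
  have absorb: "a * ((a - 1) gchoose n) = (a - real n) * (a gchoose n)"
    using gbinomial_absorb_comp[of a n] by simp
  have "(a\<^sup>2 - (real n)\<^sup>2) * (a gchoose n) - a * (2 * a - 1) / 2 * ((a - 1) gchoose n)
      = (a\<^sup>2 - (real n)\<^sup>2) * (a gchoose n) - (2 * a - 1) / 2 * (a * ((a - 1) gchoose n))"
    by simp
  also have "\<dots> = (2 * real n + 1) / 2 * ((a - real n) * (a gchoose n))"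
    unfolding absorb by (simp add: field_simps power2_eq_square)
  also have "\<dots> = (real n + 1) * (2 * real n + 1) / 2 * (a gchoose Suc n)"
    by (simp add: gbinomial_Suc_ratio [symmetric])
  finally show ?thesis .
qed

lemma op_zero_sech_pow:
  "op_zero (sech_pow b) (2 * n) = fact (2 * n) / 2 ^ (2 * n) * ((- real b / 2) gchoose n)"
proof (induction n arbitrary: b)
  case 0
  then show ?case by (simp add: op_zero_def cfn_def central_fact_def sech_pow_def)
next
  case (Suc n)
  define a where "a = - real b / 2"
  have ih: "op_zero (sech_pow b) (2 * n) = fact (2 * n) / 2 ^ (2 * n) * (a gchoose n)"
    "op_zero (sech_pow (b + 2)) (2 * n) = fact (2 * n) / 2 ^ (2 * n) * ((a - 1) gchoose n)"
    using Suc.IH[of b] Suc.IH[of "b + 2"] unfolding a_def by (simp_all add: field_simps)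
  have coeffs: "(real b)\<^sup>2 / 4 = a\<^sup>2" "real b * (real b + 1) / 4 = a * (2 * a - 1) / 2"
    unfolding a_def by (simp_all add: field_simps power2_eq_square)
  have "op_zero (sech_pow b) (2 * Suc n)
      = ((real b)\<^sup>2 / 4 - (real n)\<^sup>2) * op_zero (sech_pow b) (2 * n)
        - real b * (real b + 1) / 4 * op_zero (sech_pow (b + 2)) (2 * n)"
    using op_zero_Suc_Suc[of "sech_pow b" "2 * n"]
    unfolding sech_pow_deriv2 op_zero_lincomb[OF sech_pow_infinitely_differentiable sech_pow_infinitely_differentiable]
    by (simp add: algebra_simps power2_eq_square)
  also have "\<dots> = fact (2 * n) / 2 ^ (2 * n)
      * ((a\<^sup>2 - (real n)\<^sup>2) * (a gchoose n) - a * (2 * a - 1) / 2 * ((a - 1) gchoose n))"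
    unfolding ih coeffs by (simp add: field_simps)
  also have "\<dots> = fact (2 * Suc n) / 2 ^ (2 * Suc n) * (a gchoose Suc n)"
    unfolding gbinomial_sech_step fact_even_over_power_Suc by simp
  finally show ?case unfolding a_def .
qed


lemma higher_deriv_sinh: "(deriv ^^ k) sinh = (if even k then sinh else (cosh :: real \<Rightarrow> real))"
proof -
  have "deriv sinh = (cosh :: real \<Rightarrow> real)" "deriv cosh = (sinh :: real \<Rightarrow> real)"
    by (auto intro!: ext DERIV_imp_deriv derivative_eq_intros)
  then show ?thesis by (induction k) auto
qed

lemma op_zero_sinh_Suc_Suc: "op_zero sinh (Suc (Suc n)) = (1 - (real n)\<^sup>2 / 4) * op_zero sinh n"
  using op_zero_Suc_Suc[of sinh n] by (simp add: higher_deriv_sinh algebra_simps)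

lemma op_zero_sinh_closed_form:
  "4 / 3 * op_zero sinh (2 * n + 3) = fact (2 * n) / 2 ^ (2 * n) * ((- 5 / 2 :: real) gchoose n)"
proof (induction n)
  case 0
  have "op_zero sinh 1 = 1"
    by (simp add: op_zero_def cfn_def central_fact_def higher_deriv_sinh)
  then show ?case using op_zero_sinh_Suc_Suc[of 1] by (simp add: numeral_3_eq_3)
next
  case (Suc n)
  have "4 / 3 * op_zero sinh (2 * Suc n + 3)
      = (1 - (real (2 * n + 3))\<^sup>2 / 4) * (4 / 3 * op_zero sinh (2 * n + 3))"
    using op_zero_sinh_Suc_Suc[of "2 * n + 3"] by (simp add: algebra_simps)
  also have "\<dots> = fact (2 * n) / 2 ^ (2 * n)
      * ((2 * real n + 1) / 2 * ((- 5 / 2 - real n) * ((- 5 / 2) gchoose n)))"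
    unfolding Suc.IH by (simp add: field_simps power2_eq_square)
  also have "\<dots> = fact (2 * n) / 2 ^ (2 * n)
      * ((2 * real n + 1) / 2 * ((real n + 1) * ((- 5 / 2) gchoose Suc n)))"
    by (simp add: gbinomial_Suc_ratio)
  also have "\<dots> = fact (2 * Suc n) / 2 ^ (2 * Suc n) * ((- 5 / 2) gchoose Suc n)"
    unfolding fact_even_over_power_Suc by (simp add: field_simps)
  finally show ?case .
qed

lemma sum_odd_indices:
  fixes g :: "nat \<Rightarrow> 'a :: comm_monoid_add"
  shows "(\<Sum>k\<le>2 * m + 1. if even k then 0 else g k) = (\<Sum>k = 0..m. g (2 * k + 1))"
proof (induction m)
  case (Suc m)
  have "2 * Suc m + 1 = Suc (Suc (2 * m + 1))" by simp
  then show ?case using Suc.IH by simp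
qed simp

lemma op_zero_sinh_odd_sum: "op_zero sinh (2 * m + 1) = (\<Sum>k = 0..m. cfn (2 * m + 1) (2 * k + 1))"
  unfolding op_zero_def higher_deriv_sinh sum_odd_indices [symmetric]
  by (rule sum.cong) auto


theorem mainTheorem8:
  fixes \<nu> :: nat
  shows "op_zero (\<lambda>x. 1 / (cosh (x / 2)) ^ 5) (2 * \<nu>)
           = 4 / 3 * op_zero sinh (2 * \<nu> + 3)
       \<and> 4 / 3 * (\<Sum>k = 0..\<nu> + 1. cfn (2 * \<nu> + 3) (2 * k + 1))
           = fact (2 * \<nu>) / 2 ^ (2 * \<nu>) * ((- 5 / 2 :: real) gchoose \<nu>)"
proof
  show "op_zero (\<lambda>x. 1 / (cosh (x / 2)) ^ 5) (2 * \<nu>) = 4 / 3 * op_zero sinh (2 * \<nu> + 3)"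
    using op_zero_sech_pow[of 5 \<nu>] unfolding op_zero_sinh_closed_form
    by (simp add: sech_pow_def)
  have odd: "2 * (\<nu> + 1) + 1 = 2 * \<nu> + 3" by simp
  show "4 / 3 * (\<Sum>k = 0..\<nu> + 1. cfn (2 * \<nu> + 3) (2 * k + 1))
           = fact (2 * \<nu>) / 2 ^ (2 * \<nu>) * ((- 5 / 2 :: real) gchoose \<nu>)"
    using op_zero_sinh_odd_sum[of "\<nu> + 1", unfolded odd] op_zero_sinh_closed_form[of \<nu>] by simp
qed

end
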